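(* Let $(A,C,k)$ be an instance and $W$ an affordable committee. Let $\overline{W}$ be obtained from $W$ by seq-CC completion. Then the representation ratio of $\overline{W}$ is at least $1-\frac1e$.
   Context: An instance $(A,C,k)$ consists of a finite nonempty candidate set $C$, voters $N=\{1,\dots,n\}$, approval sets $A_i\subseteq C$, and a committee size $1\le k\le|C|$. A committee is $W\subseteq C$ with $|W|\le k$. $\mathrm{cov}(W)=|\{i: A_i\cap W\ne\emptyset\}|$; the representation ratio is $\mathrm{cov}(W)/\max\{\mathrm{cov}(W'):|W'|=k\}$. The seq-CC completion of $W$ repeatedly adds to the current committee a candidate $c$ not in it that maximizes $\mathrm{cov}$ of the committee with $c$ added (ties arbitrary), until the committee has size $k$. $W$ is affordable if there are $p_i:C\to\mathbb{R}_{\ge0}$ ($i\in N$) with $p_i(c)=0$ for $c\notin A_i$, $\sum_c p_i(c)\le k/n$, $\sum_i p_i(c)=1$ for $c\in W$, $\sum_i p_i(c)=0$ for $c\notin W$. *)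

theory Defs
  imports Complex_Main
begin

text \<open>Voters are 1..n; A i is the approval set of voter i; C the candidate set.\<close>

definition cov :: "(nat \<Rightarrow> 'c set) \<Rightarrow> nat \<Rightarrow> 'c set \<Rightarrow> nat" where
  "cov A n W = card {i \<in> {1..n}. A i \<inter> W \<noteq> {}}"

definition opt_cov :: "(nat \<Rightarrow> 'c set) \<Rightarrow> nat \<Rightarrow> 'c set \<Rightarrow> nat \<Rightarrow> nat" where
  "opt_cov A n C k = Max ((\<lambda>W. cov A n W) ` {W. W \<subseteq> C \<and> card W = k})"

definition affordable :: "(nat \<Rightarrow> 'c set) \<Rightarrow> nat \<Rightarrow> 'c set \<Rightarrow> nat \<Rightarrow> 'c set \<Rightarrow> bool" where
  "affordable A n C k W \<longleftrightarrow>
     (\<exists>p :: nat \<Rightarrow> 'c \<Rightarrow> real.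
        (\<forall>i\<in>{1..n}. \<forall>c\<in>C. p i c \<ge> 0) \<and>
        (\<forall>i\<in>{1..n}. \<forall>c\<in>C. c \<notin> A i \<longrightarrow> p i c = 0) \<and>
        (\<forall>i\<in>{1..n}. (\<Sum>c\<in>C. p i c) \<le> real k / real n) \<and>
        (\<forall>c\<in>W. (\<Sum>i\<in>{1..n}. p i c) = 1) \<and>
        (\<forall>c\<in>C - W. (\<Sum>i\<in>{1..n}. p i c) = 0))"

text \<open>seqcc_completion A n C k W W': W' is a possible outcome (any tie-breaking)
  of the seq-CC completion started at W.\<close>
inductive seqcc_completion :: "(nat \<Rightarrow> 'c set) \<Rightarrow> nat \<Rightarrow> 'c set \<Rightarrow> nat \<Rightarrow> 'c set \<Rightarrow> 'c set \<Rightarrow> bool"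
  for A n C k where
  finish: "card W = k \<Longrightarrow> seqcc_completion A n C k W W"
| step: "card W < k \<Longrightarrow> c \<in> C - W \<Longrightarrow>
         (\<forall>d\<in>C - W. cov A n (insert d W) \<le> cov A n (insert c W)) \<Longrightarrow>
         seqcc_completion A n C k (insert c W) W' \<Longrightarrow>
         seqcc_completion A n C k W W'"

end

theory Submission
  imports Defs
begin

text \<open>Write \<open>q = 1 - 1/k\<close>, \<open>OPT\<close> for the optimal coverage and \<open>W'\<close> for the completion.
  Coverage is monotone and submodular, so each greedy step closes at least a \<open>1/k\<close> fraction
  of the gap \<open>OPT - cov\<close>, and the \<open>k - |W|\<close> steps multiply the initial gap by
  \<open>q^(k - |W|)\<close>. Affordability bounds the initial gap: the members of \<open>W\<close> cost \<open>|W|\<close>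
  in total, only voters covered by \<open>W\<close> pay for them, and each pays at most \<open>k/n\<close>, so
  \<open>cov W \<ge> |W| n/k \<ge> |W| OPT/k\<close>. By Bernoulli's inequality \<open>1 - |W|/k \<le> q^|W|\<close>, hence
  \<open>OPT - cov W' \<le> q^k OPT \<le> OPT/e\<close>.\<close>

definition covered_voters :: "(nat \<Rightarrow> 'c set) \<Rightarrow> nat \<Rightarrow> 'c set \<Rightarrow> nat set" where
  "covered_voters A n S = {i \<in> {1..n}. A i \<inter> S \<noteq> {}}"

lemma finite_covered_voters [simp]: "finite (covered_voters A n S)"
  by (simp add: covered_voters_def)

lemma covered_voters_mono: "S \<subseteq> T \<Longrightarrow> covered_voters A n S \<subseteq> covered_voters A n T"
  by (auto simp: covered_voters_def)

lemma cov_eq_card_covered_voters: "cov A n S = card (covered_voters A n S)"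
  by (simp add: cov_def covered_voters_def)

lemma cov_le: "cov A n S \<le> n"
proof -
  have "card (covered_voters A n S) \<le> card {1..n}"
    by (intro card_mono) (auto simp: covered_voters_def)
  thus ?thesis by (simp add: cov_eq_card_covered_voters)
qed

lemma cov_mono: "S \<subseteq> T \<Longrightarrow> cov A n S \<le> cov A n T"
  unfolding cov_eq_card_covered_voters by (intro card_mono covered_voters_mono) simp_all

lemma cov_le_cov_plus_marginal_gains:
  assumes "finite T"
  shows "cov A n T \<le> cov A n S + (\<Sum>x\<in>T - S. cov A n (insert x S) - cov A n S)"
proof -
  let ?V = "covered_voters A n"
  let ?new = "\<lambda>x. ?V (insert x S) - ?V S"
  have "?V T \<subseteq> ?V S \<union> (\<Union>x\<in>T - S. ?new x)"
    by (auto simp: covered_voters_def)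
  moreover have "finite (?V S \<union> (\<Union>x\<in>T - S. ?new x))"
    by (rule finite_subset[of _ "{1..n}"]) (auto simp: covered_voters_def)
  ultimately have "card (?V T) \<le> card (?V S \<union> (\<Union>x\<in>T - S. ?new x))"
    by (intro card_mono)
  also have "\<dots> \<le> card (?V S) + card (\<Union>x\<in>T - S. ?new x)"
    by (rule card_Un_le)
  finally have "card (?V T) \<le> card (?V S) + card (\<Union>x\<in>T - S. ?new x)" .
  moreover have "card (\<Union>x\<in>T - S. ?new x) \<le> (\<Sum>x\<in>T - S. card (?new x))"
    using assms by (intro card_UN_le) simp
  moreover have "(\<Sum>x\<in>T - S. card (?new x)) = (\<Sum>x\<in>T - S. card (?V (insert x S)) - card (?V S))"
    by (intro sum.cong refl card_Diff_subset) (simp_all add: covered_voters_mono subset_insertI)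
  ultimately show ?thesis by (simp add: cov_eq_card_covered_voters)
qed

lemma opt_cov_attained:
  assumes "finite C" "k \<le> card C"
  obtains Opt where "Opt \<subseteq> C" "card Opt = k" "cov A n Opt = opt_cov A n C k"
proof -
  let ?F = "{W. W \<subseteq> C \<and> card W = k}"
  have "finite ?F" using assms(1) by (intro finite_subset[of ?F "Pow C"]) auto
  moreover have "?F \<noteq> {}" using obtain_subset_with_card_n[OF assms(2)] by blast
  ultimately have "Max (cov A n ` ?F) \<in> cov A n ` ?F"
    by (intro Max_in finite_imageI) auto
  hence "opt_cov A n C k \<in> cov A n ` ?F"
    by (simp only: opt_cov_def)
  then obtain Opt where "Opt \<in> ?F" "opt_cov A n C k = cov A n Opt"
    by (rule imageE)
  with that show ?thesis by auto
qed

lemma opt_cov_le: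
  assumes "finite C" "k \<le> card C"
  shows "opt_cov A n C k \<le> n"
proof -
  obtain Opt where "cov A n Opt = opt_cov A n C k"
    using opt_cov_attained[OF assms] .
  with cov_le[of A n Opt] show ?thesis by simp
qed

text \<open>Comparing an optimal committee with the greedy choice \<open>c\<close> candidate by candidate
  gives \<open>OPT - cov W \<le> k (cov (W + c) - cov W)\<close>.\<close>

lemma greedy_step_gap:
  assumes "finite C" "k \<le> card C" "1 \<le> k" "c \<in> C - W"
    and greedy: "\<forall>d\<in>C - W. cov A n (insert d W) \<le> cov A n (insert c W)"
  shows "real (opt_cov A n C k) - cov A n (insert c W)
           \<le> (1 - 1 / real k) * (real (opt_cov A n C k) - cov A n W)"
proof -
  let ?gain = "cov A n (insert c W) - cov A n W"
  obtain Opt where Opt: "Opt \<subseteq> C" "card Opt = k" "cov A n Opt = opt_cov A n C k"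
    using opt_cov_attained[OF assms(1,2)] .
  have "finite Opt" using Opt(1) assms(1) by (rule finite_subset)
  have "(\<Sum>x\<in>Opt - W. cov A n (insert x W) - cov A n W) \<le> (\<Sum>x\<in>Opt - W. ?gain)"
    using Opt(1) greedy by (intro sum_mono diff_le_mono) blast
  also have "\<dots> \<le> k * ?gain"
    using card_mono[OF \<open>finite Opt\<close>, of "Opt - W"] Opt(2) by simp
  finally have "opt_cov A n C k \<le> cov A n W + k * ?gain"
    using cov_le_cov_plus_marginal_gains[OF \<open>finite Opt\<close>, of A n W] Opt(3) by linarith
  hence "real (opt_cov A n C k) \<le> real (cov A n W + k * ?gain)"
    by (simp only: of_nat_le_iff)
  also have "\<dots> = cov A n W + real k * (real (cov A n (insert c W)) - cov A n W)"
    using cov_mono[of W "insert c W" A n] by (simp add: of_nat_diff subset_insertI)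
  finally have "real (opt_cov A n C k) - cov A n W \<le> real k * (real (cov A n (insert c W)) - cov A n W)"
    by simp
  with assms(3) show ?thesis by (simp add: field_simps)
qed

lemma seqcc_completion_gap:
  assumes "seqcc_completion A n C k S S'"
    and "finite C" "k \<le> card C" "1 \<le> k" "S \<subseteq> C"
  shows "real (opt_cov A n C k) - cov A n S'
           \<le> (1 - 1 / real k) ^ (k - card S) * (real (opt_cov A n C k) - cov A n S)"
  using assms
proof (induction rule: seqcc_completion.induct)
  case (finish W)
  then show ?case by simp
next
  case (step W c W')
  let ?q = "1 - 1 / real k"
  let ?gap = "\<lambda>S. real (opt_cov A n C k) - cov A n S"
  have "card (insert c W) = Suc (card W)"
    using step.hyps(2) finite_subset[OF step.prems(4,1)] by simp
  hence exp: "k - card W = Suc (k - card (insert c W))" using step.hyps(1) by simp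
  have q_nonneg: "0 \<le> ?q" using step.prems(3) by simp
  have "insert c W \<subseteq> C" using step.hyps(2) step.prems(4) by blast
  hence "?gap W' \<le> ?q ^ (k - card (insert c W)) * ?gap (insert c W)"
    by (rule step.IH[OF step.prems(1-3)])
  also have "\<dots> \<le> ?q ^ (k - card (insert c W)) * (?q * ?gap W)"
    using greedy_step_gap[OF step.prems(1-3) step.hyps(2,3)] q_nonneg
    by (intro mult_left_mono) simp_all
  also have "\<dots> = ?q ^ (k - card W) * ?gap W"
    unfolding exp by simp
  finally show ?case .
qed

text \<open>Only covered voters can pay for members of \<open>W\<close>, and each pays at most \<open>k/n\<close>.\<close>

lemma affordable_card_le_cov:
  assumes "affordable A n C k W" "finite C" "W \<subseteq> C"
  shows "real (card W) \<le> real (cov A n W) * real k / real n"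
proof -
  let ?V = "covered_voters A n W"
  obtain p where
    nonneg: "\<forall>i\<in>{1..n}. \<forall>c\<in>C. p i c \<ge> 0" and
    approved: "\<forall>i\<in>{1..n}. \<forall>c\<in>C. c \<notin> A i \<longrightarrow> p i c = 0" and
    budget: "\<forall>i\<in>{1..n}. (\<Sum>c\<in>C. p i c) \<le> real k / real n" and
    paid: "\<forall>c\<in>W. (\<Sum>i\<in>{1..n}. p i c) = 1"
    using assms(1) unfolding affordable_def by blast
  have "real (card W) = (\<Sum>c\<in>W. \<Sum>i\<in>{1..n}. p i c)"
    using paid by simp
  also have "\<dots> = (\<Sum>i\<in>{1..n}. \<Sum>c\<in>W. p i c)"
    by (rule sum.swap)
  also have "\<dots> = (\<Sum>i\<in>?V. \<Sum>c\<in>W. p i c)"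
    using approved assms(3)
    by (intro sum.mono_neutral_right) (auto simp: covered_voters_def intro!: sum.neutral)
  also have "\<dots> \<le> (\<Sum>i\<in>?V. real k / real n)"
  proof (rule sum_mono)
    fix i assume "i \<in> ?V"
    hence i: "i \<in> {1..n}" by (simp add: covered_voters_def)
    have "(\<Sum>c\<in>W. p i c) \<le> (\<Sum>c\<in>C. p i c)"
      using nonneg i assms(2,3) by (intro sum_mono2) auto
    with budget i show "(\<Sum>c\<in>W. p i c) \<le> real k / real n" by fastforce
  qed
  finally show ?thesis by (simp add: cov_eq_card_covered_voters)
qed

lemma affordable_gap:
  assumes "affordable A n C k W" "finite C" "W \<subseteq> C" "k \<le> card C" "1 \<le> k" "1 \<le> n"
  shows "real (opt_cov A n C k) - cov A n W \<le> real (opt_cov A n C k) * (1 - real (card W) / real k)"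
proof -
  have "real (card W) * real n \<le> real (cov A n W) * real k"
    using affordable_card_le_cov[OF assms(1-3)] assms(6) by (simp add: field_simps)
  moreover have "real (opt_cov A n C k) * real (card W) \<le> real n * real (card W)"
    using opt_cov_le[OF assms(2,4)] by (intro mult_right_mono) simp_all
  ultimately show ?thesis
    using assms(5) by (simp add: field_simps)
qed

lemma one_minus_div_le_power:
  assumes "1 \<le> k"
  shows "1 - real m / real k \<le> (1 - 1 / real k) ^ m"
proof -
  have "-1 \<le> - 1 / real k" using assms by simp
  from Bernoulli_inequality[OF this, of m] show ?thesis by simp
qed

lemma one_minus_inverse_power_le_exp:
  assumes "1 \<le> k"
  shows "(1 - 1 / real k) ^ k \<le> exp (-1)"
proof -
  have "(1 - 1 / real k) ^ k \<le> exp (- 1 / real k) ^ k"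
    using exp_ge_add_one_self[of "- 1 / real k"] assms by (intro power_mono) simp_all
  also have "\<dots> = exp (-1)"
    using assms by (simp flip: exp_of_nat_mult)
  finally show ?thesis .
qed

theorem theorem5:
  fixes A :: "nat \<Rightarrow> 'c set" and n k :: nat and C W Wbar :: "'c set"
  assumes "finite C" and "C \<noteq> {}"
    and "n \<ge> 1"
    and "\<forall>i\<in>{1..n}. A i \<subseteq> C"
    and "1 \<le> k" and "k \<le> card C"
    and "W \<subseteq> C" and "card W \<le> k"
    and "affordable A n C k W"
    and "seqcc_completion A n C k W Wbar"
  shows "real (cov A n Wbar) \<ge> (1 - 1 / exp 1) * real (opt_cov A n C k)"
proof -
  let ?q = "1 - 1 / real k"
  let ?opt = "real (opt_cov A n C k)"
  have q_nonneg: "0 \<le> ?q" using assms(5) by simp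
  have initial_gap: "?opt - cov A n W \<le> ?opt * ?q ^ card W"
    using affordable_gap[OF assms(9,1,7,6,5,3)] one_minus_div_le_power[OF assms(5), of "card W"]
    by (rule order_trans[OF _ mult_left_mono]) simp
  have "?opt - cov A n Wbar \<le> ?q ^ (k - card W) * (?opt - cov A n W)"
    using seqcc_completion_gap[OF assms(10,1,6,5,7)] .
  also have "\<dots> \<le> ?q ^ (k - card W) * (?opt * ?q ^ card W)"
    using initial_gap q_nonneg by (intro mult_left_mono zero_le_power)
  also have "\<dots> = ?opt * ?q ^ k"
    using assms(8) by (simp add: ac_simps flip: power_add)
  also have "\<dots> \<le> ?opt * exp (-1)"
    using one_minus_inverse_power_le_exp[OF assms(5)] by (rule mult_left_mono) simp
  finally have "?opt - cov A n Wbar \<le> ?opt * exp (-1)" .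
  moreover have "(1 - 1 / exp 1) * ?opt = ?opt - ?opt * exp (-1)"
    by (simp add: exp_minus inverse_eq_divide algebra_simps)
  ultimately show ?thesis by linarith
qed

end
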